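(* Let $M$ be a finite abelian group of exponent greater than $2$, and let $f$ be a half-automorphism of $L_M$. Then $f((1,M))=(1,M)$, where $(1,M)=\{(1,x):x\in M\}$.
   Context: Let $K=\{1,a,b,c\}$ be the Klein four-group. Set $L_M=K\times M$ with the operation $(A,x)*(B,y)=(AB,xy)$ if $B=1$, and $(A,x)*(B,y)=(AB,x^{-1}y)$ if $B\neq 1$. A half-automorphism of a loop $L$ is a bijection $f:L\to L$ such that $f(XY)\in\{f(X)f(Y),f(Y)f(X)\}$ for all $X,Y\in L$. *)

theory Defs
  imports Main
begin

datatype klein = K1 | Ka | Kb | Kc

fun kmult :: "klein \<Rightarrow> klein \<Rightarrow> klein" where
  "kmult K1 y = y"
| "kmult x K1 = x"
| "kmult Ka Ka = K1" | "kmult Kb Kb = K1" | "kmult Kc Kc = K1"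
| "kmult Ka Kb = Kc" | "kmult Kb Ka = Kc"
| "kmult Ka Kc = Kb" | "kmult Kc Ka = Kb"
| "kmult Kb Kc = Ka" | "kmult Kc Kb = Ka"

text \<open>The loop L_M = K x M, with M an abelian group written additively
  (so the paper's x^{-1} y is (-x) + y).\<close>
definition Lmult :: "klein \<times> 'a::ab_group_add \<Rightarrow> klein \<times> 'a \<Rightarrow> klein \<times> 'a" where
  "Lmult X Y = (case X of (A, x) \<Rightarrow> case Y of (B, y) \<Rightarrow>
      if B = K1 then (kmult A B, x + y) else (kmult A B, - x + y))"

definition half_automorphism :: "(klein \<times> 'a::ab_group_add \<Rightarrow> klein \<times> 'a) \<Rightarrow> bool" where
  "half_automorphism f \<longleftrightarrow> bij f \<and>
     (\<forall>X Y. f (Lmult X Y) \<in> {Lmult (f X) (f Y), Lmult (f Y) (f X)})"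

definition group_exponent :: "'a::ab_group_add itself \<Rightarrow> nat" where
  "group_exponent _ = (LEAST n. 0 < n \<and> (\<forall>x::'a. ((plus x) ^^ n) 0 = 0))"

end

theory Submission
  imports Defs
begin

text \<open>A half-automorphism f preserves squares, and in L_M the square of (A, x) is
  (1, 2x) if A = 1 and (1, 0) otherwise. Since (1, 0) is the only idempotent, f fixes it;
  so if 2x \<noteq> 0, the square of f(1, x) is f(1, 2x) \<noteq> (1, 0), forcing f(1, x) \<in> (1, M).
  Exponent greater than 2 gives some y with 2y \<noteq> 0, and every x with 2x = 0 is the product
  of (1, x + y) and (1, -y), whose doubles are nonzero; as (1, M) is closed under
  multiplication, f maps (1, M) into itself, hence onto it by finiteness and injectivity.\<close>

lemma kmult_self [simp]: "kmult A A = K1"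
  by (cases A) auto

lemma Lmult_K1 [simp]: "Lmult (K1, x) (K1, y) = (K1, x + y)"
  by (simp add: Lmult_def)

lemma Lmult_square: "Lmult (A, x) (A, x) = (if A = K1 then (K1, x + x) else (K1, 0))"
  by (cases A) (auto simp: Lmult_def)

lemma Lmult_fst_K1_iff:
  "fst (Lmult X Y) = K1 \<longleftrightarrow> fst X = fst Y"
proof -
  obtain A x B y where "X = (A, x)" "Y = (B, y)" by fastforce
  then show ?thesis by (cases A; cases B) (auto simp: Lmult_def)
qed

lemma group_exponent_gt_2_imp_double_neq_0:
  assumes "group_exponent TYPE('a::ab_group_add) > 2"
  obtains y where "y + y \<noteq> (0::'a)"
proof -
  have "\<not> (\<forall>x::'a. x + x = 0)"
  proof
    assume "\<forall>x::'a. x + x = 0"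
    then have "group_exponent TYPE('a) \<le> 2"
      unfolding group_exponent_def by (intro Least_le) (simp add: numeral_2_eq_2)
    with assms show False by simp
  qed
  then show thesis using that by blast
qed

lemma half_automorphism_inj: "half_automorphism f \<Longrightarrow> inj f"
  by (simp add: half_automorphism_def bij_is_inj)

lemma half_automorphism_mult:
  "half_automorphism f \<Longrightarrow> f (Lmult X Y) \<in> {Lmult (f X) (f Y), Lmult (f Y) (f X)}"
  unfolding half_automorphism_def by blast

lemma half_automorphism_square:
  "half_automorphism f \<Longrightarrow> f (Lmult X X) = Lmult (f X) (f X)"
  using half_automorphism_mult[of f X X] by simp

lemma half_automorphism_fixes_identity:
  fixes f :: "klein \<times> 'a::ab_group_add \<Rightarrow> klein \<times> 'a"
  assumes "half_automorphism f"
  shows "f (K1, 0) = (K1, 0)"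
proof -
  obtain A u where fe: "f (K1, 0) = (A, u)" by fastforce
  have "(A, u) = Lmult (A, u) (A, u)"
    using half_automorphism_square[OF assms, of "(K1, 0)"] fe by simp
  then show ?thesis
    using fe by (auto simp: Lmult_square split: if_splits)
qed

lemma half_automorphism_fst_K1_of_double_neq_0:
  fixes f :: "klein \<times> 'a::ab_group_add \<Rightarrow> klein \<times> 'a"
  assumes f: "half_automorphism f" and "z + z \<noteq> 0"
  shows "fst (f (K1, z)) = K1"
proof (rule ccontr)
  assume "fst (f (K1, z)) \<noteq> K1"
  then have "f (K1, z + z) = (K1, 0)"
    using half_automorphism_square[OF f, of "(K1, z)"]
    by (cases "f (K1, z)") (simp add: Lmult_square)
  also have "\<dots> = f (K1, 0)"
    using half_automorphism_fixes_identity[OF f] by simp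
  finally have "z + z = 0"
    using injD[OF half_automorphism_inj[OF f]] by blast
  with \<open>z + z \<noteq> 0\<close> show False ..
qed

lemma half_automorphism_fst_K1:
  fixes f :: "klein \<times> 'a::ab_group_add \<Rightarrow> klein \<times> 'a" and x y :: 'a
  assumes f: "half_automorphism f" and y: "y + y \<noteq> 0"
  shows "fst (f (K1, x)) = K1"
proof (cases "x + x = 0")
  case False
  then show ?thesis by (rule half_automorphism_fst_K1_of_double_neq_0[OF f])
next
  case True
  have "(x + y) + (x + y) = (x + x) + (y + y)"
    by (simp add: algebra_simps)
  also have "\<dots> = y + y"
    using True by simp
  finally have "(x + y) + (x + y) \<noteq> 0"
    using y by argo
  moreover have "(-y) + (-y) \<noteq> 0"
    using y by (metis minus_add_distrib neg_equal_0_iff_equal)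
  ultimately have "fst (f (K1, x + y)) = K1" "fst (f (K1, -y)) = K1"
    using half_automorphism_fst_K1_of_double_neq_0[OF f] by blast+
  moreover have "f (K1, x) \<in> {Lmult (f (K1, x + y)) (f (K1, -y)), Lmult (f (K1, -y)) (f (K1, x + y))}"
    using half_automorphism_mult[OF f, of "(K1, x + y)" "(K1, -y)"] by simp
  ultimately show ?thesis
    by (auto simp: Lmult_fst_K1_iff)
qed

theorem proposition4p1:
  fixes f :: "klein \<times> 'a::{ab_group_add, finite} \<Rightarrow> klein \<times> 'a"
  assumes "group_exponent TYPE('a) > 2"
    and "half_automorphism f"
  shows "f ` {(K1, x) | x. True} = {(K1, x) | x. True}"
proof -
  obtain y :: 'a where y: "y + y \<noteq> 0"
    using group_exponent_gt_2_imp_double_neq_0[OF assms(1)] by blast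
  have S: "{(K1, x) | x::'a. True} = {K1} \<times> UNIV" by auto
  have "f ` ({K1} \<times> UNIV) \<subseteq> {K1} \<times> UNIV"
    using half_automorphism_fst_K1[OF assms(2) y] by (auto simp: mem_Times_iff) (metis fst_conv)
  moreover have "inj_on f ({K1} \<times> UNIV)"
    using half_automorphism_inj[OF assms(2)] by (rule inj_on_subset) simp
  ultimately show ?thesis
    unfolding S by (intro endo_inj_surj) simp_all
qed

end
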